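(* Let $n_1,n_2\in\mathbb{Z}$ and let $\overline{\nabla}_{(n_1)},\overline{\nabla}_{(n_2)}$ be the standard holomorphic structures on $\mathcal{L}_{n_1},\mathcal{L}_{n_2}$. Then the tensor product connection $$\overline{\nabla}_{(n_1)}\otimes 1+(\Phi_{(n_1)}\otimes 1)(1\otimes\overline{\nabla}_{(n_2)}):\ \mathcal{L}_{n_1}\otimes_{\mathcal{B}}\mathcal{L}_{n_2}\to\Omega^{(0,1)}(\mathbb{CP}^1_q)\otimes_{\mathcal{B}}\mathcal{L}_{n_1}\otimes_{\mathcal{B}}\mathcal{L}_{n_2}$$ coincides with the standard holomorphic structure $\overline{\nabla}_{(n_1+n_2)}$ on $\mathcal{L}_{n_1+n_2}$ when $\mathcal{L}_{n_1}\otimes_{\mathcal{B}}\mathcal{L}_{n_2}$ is identified with $\mathcal{L}_{n_1+n_2}$ via multiplication.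
   Context: Fix $0<q<1$. Let $\mathcal{A}(SU_q(2))$ be the unital complex $*$-algebra generated by $a,c$ subject to $ac=qca$, $ac^*=qc^*a$, $cc^*=c^*c$, $a^*a+c^*c=aa^*+q^2cc^*=1$. Let $U_q(su(2))$ be the Hopf algebra generated by $K,K^{-1},E,F$ with $KK^{-1}=K^{-1}K=1$, $KE=qEK$, $KF=q^{-1}FK$, $EF-FE=(K^2-K^{-2})/(q-q^{-1})$, coproduct $\Delta K=K\otimes K$, $\Delta E=E\otimes K+K^{-1}\otimes E$, $\Delta F=F\otimes K+K^{-1}\otimes F$, counit $\epsilon(K)=1$, $\epsilon(E)=\epsilon(F)=0$. It acts on $\mathcal{A}(SU_q(2))$ from the left making it a left module algebra, with $K\triangleright a=q^{-1/2}a$, $K\triangleright c=q^{-1/2}c$, $K\triangleright a^*=q^{1/2}a^*$, $K\triangleright c^*=q^{1/2}c^*$, $E\triangleright a=-qc^*$, $E\triangleright c=a^*$, $E\triangleright a^*=E\triangleright c^*=0$, $F\triangleright a=F\triangleright c=0$, $F\triangleright a^*=c$, $F\triangleright c^*=-q^{-1}a$. Put $X_-=q^{-1/2}FK$. For $n\in\mathbb{Z}$ let $\mathcal{L}_n=\{x:K\triangleright x=q^{n/2}x\}$ and $\mathcal{B}=\mathcal{A}(\mathbb{CP}^1_q):=\mathcal{L}_0$; each $\mathcal{L}_n$ is a $\mathcal{B}$-bimodule, and multiplication induces $\mathcal{B}$-bimodule isomorphisms $\mathcal{L}_n\otimes_{\mathcal{B}}\mathcal{L}_m\simeq\mathcal{L}_{n+m}$.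 Let $\Omega^1(SU_q(2))$ be the $\mathcal{A}(SU_q(2))$-bimodule which is free as a left module with basis $\omega_+,\omega_-,\omega_z$, with right multiplication determined by $\omega_\pm x=q^kx\omega_\pm$, $\omega_zx=q^{2k}x\omega_z$ for $x\in\mathcal{L}_k$. Put $\Omega^{(0,1)}(\mathbb{CP}^1_q):=\mathcal{L}_{-2}\omega_-$. For each $n$ the multiplication maps $\mu_1^{(n)}:\mathcal{L}_n\otimes_{\mathcal{B}}\Omega^{(0,1)}(\mathbb{CP}^1_q)\to\mathcal{L}_{n-2}\omega_-$ and $\mu_2^{(n)}:\Omega^{(0,1)}(\mathbb{CP}^1_q)\otimes_{\mathcal{B}}\mathcal{L}_n\to\mathcal{L}_{n-2}\omega_-$ are $\mathcal{B}$-bimodule isomorphisms; set $\Phi_{(n)}:=(\mu_2^{(n)})^{-1}\circ\mu_1^{(n)}$. The standard holomorphic structure on $\mathcal{L}_n$ is $\overline{\nabla}_{(n)}:\mathcal{L}_n\to\Omega^{(0,1)}(\mathbb{CP}^1_q)\otimes_{\mathcal{B}}\mathcal{L}_n$, $\overline{\nabla}_{(n)}(\phi)=(\mu_2^{(n)})^{-1}\big((X_-\triangleright\phi)\omega_-\big)$. *)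

theory Defs
  imports Complex_Main
begin

text \<open>The carrier is a unital ring 'a with a complex scalar multiplication smul, an
  antilinear involution star, generators a, c, and the action of the generators
  K, K^-1 (here Ki), E, F of U_q(su(2)) as operators on 'a.\<close>

definition rs :: "real \<Rightarrow> complex" where "rs r = complex_of_real r"

inductive_set suq2_gen :: "(complex \<Rightarrow> 'a::ring_1 \<Rightarrow> 'a) \<Rightarrow> ('a \<Rightarrow> 'a) \<Rightarrow> 'a \<Rightarrow> 'a \<Rightarrow> 'a set"
  for smul star a c where
  gen_one: "1 \<in> suq2_gen smul star a c"
| gen_a: "a \<in> suq2_gen smul star a c"
| gen_c: "c \<in> suq2_gen smul star a c"
| gen_as: "star a \<in> suq2_gen smul star a c"
| gen_cs: "star c \<in> suq2_gen smul star a c"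
| gen_add: "x \<in> suq2_gen smul star a c \<Longrightarrow> y \<in> suq2_gen smul star a c \<Longrightarrow> x + y \<in> suq2_gen smul star a c"
| gen_smul: "x \<in> suq2_gen smul star a c \<Longrightarrow> smul r x \<in> suq2_gen smul star a c"
| gen_mult: "x \<in> suq2_gen smul star a c \<Longrightarrow> y \<in> suq2_gen smul star a c \<Longrightarrow> x * y \<in> suq2_gen smul star a c"

definition complex_star_algebra :: "(complex \<Rightarrow> 'a::ring_1 \<Rightarrow> 'a) \<Rightarrow> ('a \<Rightarrow> 'a) \<Rightarrow> bool" where
  "complex_star_algebra smul star \<longleftrightarrow>
     (\<forall>r x y. smul r (x + y) = smul r x + smul r y) \<and>
     (\<forall>r s x. smul (r + s) x = smul r x + smul s x) \<and>
     (\<forall>r s x. smul r (smul s x) = smul (r * s) x) \<and>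
     (\<forall>x. smul 1 x = x) \<and>
     (\<forall>r x y. smul r (x * y) = smul r x * y \<and> smul r (x * y) = x * smul r y) \<and>
     (\<forall>x y. star (x + y) = star x + star y) \<and>
     (\<forall>r x. star (smul r x) = smul (cnj r) (star x)) \<and>
     (\<forall>x y. star (x * y) = star y * star x) \<and>
     (\<forall>x. star (star x) = x)"

definition suq2_algebra :: "real \<Rightarrow> (complex \<Rightarrow> 'a::ring_1 \<Rightarrow> 'a) \<Rightarrow> ('a \<Rightarrow> 'a) \<Rightarrow> 'a \<Rightarrow> 'a \<Rightarrow> bool" where
  "suq2_algebra q smul star a c \<longleftrightarrow>
     0 < q \<and> q < 1 \<and> complex_star_algebra smul star \<and>
     a * c = smul (rs q) (c * a) \<and>
     a * star c = smul (rs q) (star c * a) \<and>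
     c * star c = star c * c \<and>
     star a * a + star c * c = 1 \<and>
     a * star a + smul (rs (q^2)) (c * star c) = 1 \<and>
     suq2_gen smul star a c = UNIV"

definition lin_op :: "(complex \<Rightarrow> 'a::ring_1 \<Rightarrow> 'a) \<Rightarrow> ('a \<Rightarrow> 'a) \<Rightarrow> bool" where
  "lin_op smul T \<longleftrightarrow> (\<forall>x y. T (x + y) = T x + T y) \<and> (\<forall>r x. T (smul r x) = smul r (T x))"

definition suq2_module_algebra ::
  "real \<Rightarrow> (complex \<Rightarrow> 'a::ring_1 \<Rightarrow> 'a) \<Rightarrow> ('a \<Rightarrow> 'a) \<Rightarrow> 'a \<Rightarrow> 'a \<Rightarrow>
   ('a \<Rightarrow> 'a) \<Rightarrow> ('a \<Rightarrow> 'a) \<Rightarrow> ('a \<Rightarrow> 'a) \<Rightarrow> ('a \<Rightarrow> 'a) \<Rightarrow> bool" where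
  "suq2_module_algebra q smul star a c K Ki E F \<longleftrightarrow>
     suq2_algebra q smul star a c \<and>
     lin_op smul K \<and> lin_op smul Ki \<and> lin_op smul E \<and> lin_op smul F \<and>
     \<comment> \<open>representation of U_q(su(2))\<close>
     (\<forall>x. K (Ki x) = x \<and> Ki (K x) = x) \<and>
     (\<forall>x. K (E x) = smul (rs q) (E (K x))) \<and>
     (\<forall>x. K (F x) = smul (rs (1 / q)) (F (K x))) \<and>
     (\<forall>x. E (F x) - F (E x) = smul (1 / rs (q - 1 / q)) (K (K x) - Ki (Ki x))) \<and>
     \<comment> \<open>module algebra: compatibility with coproduct and counit\<close>
     (\<forall>x y. K (x * y) = K x * K y) \<and>
     (\<forall>x y. Ki (x * y) = Ki x * Ki y) \<and>
     (\<forall>x y. E (x * y) = E x * K y + Ki x * E y) \<and>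
     (\<forall>x y. F (x * y) = F x * K y + Ki x * F y) \<and>
     K 1 = 1 \<and> Ki 1 = 1 \<and> E 1 = 0 \<and> F 1 = 0 \<and>
     \<comment> \<open>action on generators\<close>
     K a = smul (rs (q powr (-1/2))) a \<and> K c = smul (rs (q powr (-1/2))) c \<and>
     K (star a) = smul (rs (q powr (1/2))) (star a) \<and> K (star c) = smul (rs (q powr (1/2))) (star c) \<and>
     E a = - smul (rs q) (star c) \<and> E c = star a \<and> E (star a) = 0 \<and> E (star c) = 0 \<and>
     F a = 0 \<and> F c = 0 \<and> F (star a) = c \<and> F (star c) = - smul (rs (1 / q)) a"

text \<open>Line bundles L_n = {x. K x = q^(n/2) x}; B = L_0.\<close>
definition Lsp :: "real \<Rightarrow> (complex \<Rightarrow> 'a::ring_1 \<Rightarrow> 'a) \<Rightarrow> ('a \<Rightarrow> 'a) \<Rightarrow> int \<Rightarrow> 'a set" where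
  "Lsp q smul K n = {x. K x = smul (rs (q powr (real_of_int n / 2))) x}"

definition Xminus :: "real \<Rightarrow> (complex \<Rightarrow> 'a::ring_1 \<Rightarrow> 'a) \<Rightarrow> ('a \<Rightarrow> 'a) \<Rightarrow> ('a \<Rightarrow> 'a) \<Rightarrow> 'a \<Rightarrow> 'a" where
  "Xminus q smul K F x = smul (rs (q powr (-1/2))) (F (K x))"

text \<open>Omega^1(SU_q(2)): free left module with basis omega_+, omega_-, omega_z; an element
  is its triple of coefficients (alpha, beta, gamma) = alpha omega_+ + beta omega_- + gamma omega_z.\<close>
type_synonym 'a omega1 = "'a \<times> 'a \<times> 'a"

definition om_add :: "'a::ring_1 omega1 \<Rightarrow> 'a omega1 \<Rightarrow> 'a omega1" where
  "om_add u v = (fst u + fst v, fst (snd u) + fst (snd v), snd (snd u) + snd (snd v))"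

definition omega_minus :: "'a::ring_1 \<Rightarrow> 'a omega1" where
  "omega_minus x = (0, x, 0)"

definition om_lmult :: "'a::ring_1 \<Rightarrow> 'a omega1 \<Rightarrow> 'a omega1" where
  "om_lmult x u = (x * fst u, x * fst (snd u), x * snd (snd u))"

text \<open>right multiplication omega * x for homogeneous x \<in> L_k:
  omega_pm x = q^k x omega_pm, omega_z x = q^(2k) x omega_z.\<close>
definition om_rmult_hom :: "real \<Rightarrow> (complex \<Rightarrow> 'a::ring_1 \<Rightarrow> 'a) \<Rightarrow> ('a \<Rightarrow> 'a) \<Rightarrow> 'a omega1 \<Rightarrow> 'a \<Rightarrow> 'a omega1" where
  "om_rmult_hom q smul K u x =
     (let k = (SOME k. x \<in> Lsp q smul K k) in
       (fst u * smul (rs (q powr real_of_int k)) x,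
        fst (snd u) * smul (rs (q powr real_of_int k)) x,
        snd (snd u) * smul (rs (q powr (2 * real_of_int k))) x))"

text \<open>The standard holomorphic structure, composed with mu_2^(n):
  mu_2^(n) (nablabar_(n) phi) = (X_- phi) omega_-.\<close>
definition nablabar_img :: "real \<Rightarrow> (complex \<Rightarrow> 'a::ring_1 \<Rightarrow> 'a) \<Rightarrow> ('a \<Rightarrow> 'a) \<Rightarrow> ('a \<Rightarrow> 'a) \<Rightarrow> 'a \<Rightarrow> 'a omega1" where
  "nablabar_img q smul K F phi = omega_minus (Xminus q smul K F phi)"

end

theory Submission
  imports Defs
begin

text \<open>Since K is multiplicative, the product of elements of degrees n1 and n2 has degree
  n1 + n2.  The operator X_- = q^(-1/2) F K inherits from the coproduct of F the twisted
  Leibniz rule X_-(xy) = X_-(x) K^2(y) + x X_-(y), and K^2 acts on L_n by q^n, which is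
  exactly the factor by which omega_- is commuted past an element of L_n.  Hence the
  tensor product connection reproduces X_-(phi1 phi2) omega_-.\<close>

lemma complex_star_algebra_smul_laws:
  assumes "complex_star_algebra smul star"
  shows smul_add_right: "smul r (x + y) = smul r x + smul r y"
    and smul_add_left: "smul (r + s) x = smul r x + smul s x"
    and smul_smul: "smul r (smul s x) = smul (r * s) x"
    and smul_one: "smul 1 x = x"
    and smul_mult_left: "smul r (x * y) = smul r x * y"
    and smul_mult_right: "smul r (x * y) = x * smul r y"
  using assms unfolding complex_star_algebra_def by blast+

lemma smul_zero_right:
  assumes "complex_star_algebra smul star"
  shows "smul r 0 = 0"
  using smul_add_right[OF assms, of r 0 0] by simp

lemma smul_cancel_right:
  assumes "complex_star_algebra smul star" and "smul r x = smul s x" and "x \<noteq> 0"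
  shows "r = s"
proof (rule ccontr)
  assume "r \<noteq> s"
  have "smul (r - s) x = 0"
    using assms(2) smul_add_left[OF assms(1), of "r - s" s x] by simp
  then have "smul (1 / (r - s)) (smul (r - s) x) = 0"
    by (simp add: smul_zero_right[OF assms(1)])
  then have "x = 0"
    using \<open>r \<noteq> s\<close> by (simp add: smul_smul[OF assms(1)] smul_one[OF assms(1)])
  with assms(3) show False ..
qed

lemma rs_powr_add: "0 < q \<Longrightarrow> rs (q powr x) * rs (q powr y) = rs (q powr (x + y))"
  by (simp add: rs_def powr_add)

lemma Lsp_mult:
  assumes "complex_star_algebra smul star" and "0 < q"
    and K_mult: "\<And>x y. K (x * y) = K x * K y"
    and "x \<in> Lsp q smul K n" and "y \<in> Lsp q smul K m"
  shows "x * y \<in> Lsp q smul K (n + m)"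
proof -
  have "K (x * y) = smul (rs (q powr (n / 2))) x * smul (rs (q powr (m / 2))) y"
    using assms(4,5) by (simp add: K_mult Lsp_def)
  also have "\<dots> = smul (rs (q powr (m / 2)) * rs (q powr (n / 2))) (x * y)"
    by (simp only: smul_mult_left[OF assms(1), symmetric] smul_mult_right[OF assms(1), symmetric]
        smul_smul[OF assms(1)])
  also have "\<dots> = smul (rs (q powr (real_of_int (n + m) / 2))) (x * y)"
    using assms(2) by (simp add: rs_powr_add add_divide_distrib add.commute)
  finally show ?thesis by (simp add: Lsp_def)
qed

lemma Lsp_degree_unique:
  assumes "complex_star_algebra smul star" and "0 < q" and "q \<noteq> 1"
    and "x \<in> Lsp q smul K n" and "x \<in> Lsp q smul K m" and "x \<noteq> 0"
  shows "n = m"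
proof -
  have "rs (q powr (n / 2)) = rs (q powr (m / 2))"
    using assms(4,5) by (intro smul_cancel_right[OF assms(1) _ assms(6)]) (simp add: Lsp_def)
  then have "q powr (n / 2) = q powr (m / 2)"
    by (simp add: rs_def)
  with assms(2,3) show ?thesis
    by (simp add: powr_inj)
qed

text \<open>The degree chosen by SOME in om_rmult_hom is immaterial for x = 0, and unique otherwise.\<close>
lemma om_rmult_hom_Lsp:
  assumes "complex_star_algebra smul star" and "0 < q" and "q \<noteq> 1"
    and "x \<in> Lsp q smul K n"
  shows "om_rmult_hom q smul K u x =
    (fst u * smul (rs (q powr n)) x, fst (snd u) * smul (rs (q powr n)) x,
     snd (snd u) * smul (rs (q powr (2 * n))) x)"
proof (cases "x = 0")
  case True
  then show ?thesis
    by (simp add: om_rmult_hom_def Let_def smul_zero_right[OF assms(1)])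
next
  case False
  have "x \<in> Lsp q smul K (SOME k. x \<in> Lsp q smul K k)"
    using assms(4) by (rule someI)
  then have "(SOME k. x \<in> Lsp q smul K k) = n"
    using Lsp_degree_unique[OF assms(1-3) _ assms(4) False] by blast
  then show ?thesis
    by (simp add: om_rmult_hom_def Let_def)
qed

lemma Lsp_K_K:
  assumes "complex_star_algebra smul star" and "0 < q"
    and K_smul: "\<And>r x. K (smul r x) = smul r (K x)" and "x \<in> Lsp q smul K n"
  shows "K (K x) = smul (rs (q powr n)) x"
proof -
  have "K (K x) = smul (rs (q powr (n / 2)) * rs (q powr (n / 2))) x"
    using assms(4) by (simp add: Lsp_def K_smul smul_smul[OF assms(1)])
  also have "rs (q powr (n / 2)) * rs (q powr (n / 2)) = rs (q powr n)"
    using assms(2) by (simp add: rs_powr_add)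
  finally show ?thesis .
qed

lemma suq2_module_algebraD:
  assumes "suq2_module_algebra q smul star a c K Ki E F"
  shows "complex_star_algebra smul star" and "0 < q" and "q < 1"
    and "K (smul r x) = smul r (K x)" and "Ki (K x) = x"
    and "K (x * y) = K x * K y" and "F (x * y) = F x * K y + Ki x * F y"
  using assms unfolding suq2_module_algebra_def suq2_algebra_def lin_op_def by auto

lemma Xminus_mult:
  assumes "suq2_module_algebra q smul star a c K Ki E F"
  shows "Xminus q smul K F (x * y) = Xminus q smul K F x * K (K y) + x * Xminus q smul K F y"
proof -
  note laws = suq2_module_algebraD[OF assms]
  note csa = laws(1)
  have "F (K (x * y)) = F (K x) * K (K y) + x * F (K y)"
    by (simp add: laws(5-7))
  then show ?thesis
    by (simp only: Xminus_def smul_add_right[OF csa] smul_mult_left[OF csa, symmetric]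
        smul_mult_right[OF csa, symmetric])
qed

theorem proposition3p8:
  fixes q :: real and smul :: "complex \<Rightarrow> 'a::ring_1 \<Rightarrow> 'a"
    and star K Ki E F :: "'a \<Rightarrow> 'a" and a c :: 'a
    and n1 n2 :: int and phi1 phi2 :: 'a
  assumes "suq2_module_algebra q smul star a c K Ki E F"
    and "phi1 \<in> Lsp q smul K n1" and "phi2 \<in> Lsp q smul K n2"
  shows "phi1 * phi2 \<in> Lsp q smul K (n1 + n2) \<and>
         om_add (om_rmult_hom q smul K (nablabar_img q smul K F phi1) phi2)
                (om_lmult phi1 (nablabar_img q smul K F phi2))
         = nablabar_img q smul K F (phi1 * phi2)"
proof
  note laws = suq2_module_algebraD[OF assms(1)]
  have "q \<noteq> 1" using laws(3) by simp
  show "phi1 * phi2 \<in> Lsp q smul K (n1 + n2)"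
    using Lsp_mult[OF laws(1,2)] laws(6) assms(2,3) by blast
  have "K (K phi2) = smul (rs (q powr n2)) phi2"
    using Lsp_K_K[OF laws(1,2)] laws(4) assms(3) by blast
  then show "om_add (om_rmult_hom q smul K (nablabar_img q smul K F phi1) phi2)
                (om_lmult phi1 (nablabar_img q smul K F phi2))
         = nablabar_img q smul K F (phi1 * phi2)"
    using om_rmult_hom_Lsp[OF laws(1,2) \<open>q \<noteq> 1\<close> assms(3)]
    by (simp add: Xminus_mult[OF assms(1)] nablabar_img_def omega_minus_def om_add_def
        om_lmult_def)
qed

end
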